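(* Let $G=(V,E,w)$ be a similarity graph. If $G$ is a ground-truth input, then $G$ has perfect HC-structure. The converse does not hold: there exists a graph with perfect HC-structure that is not a ground-truth input.
   Context: Weights are symmetric and nonnegative, with $w(x,y)=0$ if $(x,y)\notin E$. $G$ is a ground-truth input (similarity graph generated from an ultrametric) if there exist an ultrametric $d$ on $V$ (a metric with $d(x,y)\le\max\{d(x,z),d(y,z)\}$ for all $x,y,z$) and a non-increasing function $f:\mathbb{R}_+\to\mathbb{R}_+$ such that $w(x,y)=f(d(x,y))$ for all $x\ne y\in V$. An HC-tree for $V=\{v_1,\dots,v_n\}$ is a rooted tree with leaf set $V$. For distinct $i,j,k$: $\{i,j|k\}$ holds in $T$ if $\mathrm{LCA}(v_i,v_j)$ is a proper descendant of $\mathrm{LCA}(v_i,v_j,v_k)$; $\{i|j|k\}$ holds if $\mathrm{LCA}(v_i,v_j)=\mathrm{LCA}(v_j,v_k)=\mathrm{LCA}(v_i,v_j,v_k)$. Triplet cost $c_T(i,j,k)$: $w_{ik}+w_{jk}$ if $\{i,j|k\}$; $w_{ij}+w_{jk}$ if $\{i,k|j\}$; $w_{ij}+w_{ik}$ if $\{j,k|i\}$; $w_{ij}+w_{jk}+w_{ik}$ if $\{i|j|k\}$. $\mathrm{TC}_G(T)=\sum c_T(i,j,k)$ and $\mathrm{BC}(G)=\sum\min\{w_{ij}+w_{ik},w_{ij}+w_{jk},w_{ik}+w_{jk}\}$ over unordered triples of distinct indices; $\rho_G(T)=\mathrm{TC}_G(T)/\mathrm{BC}(G)$ (with $0/0=1$,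 $x/0=+\infty$ for $x>0$), $\rho^*_G=\min_T\rho_G(T)$. $G$ has perfect HC-structure if $\rho^*_G=1$, equivalently if some HC-tree $T$ has $\mathrm{TC}_G(T)=\mathrm{BC}(G)$. *)

theory Defs
  imports Complex_Main "HOL-Library.Extended_Real"
begin

text \<open>A similarity graph on a finite nonempty vertex set V with symmetric nonnegative
  weights w. The edge set E is implicit: it is the support of w (w x y = 0 off E).\<close>

definition similarity_graph :: "'a set \<Rightarrow> ('a \<Rightarrow> 'a \<Rightarrow> real) \<Rightarrow> bool" where
  "similarity_graph V w \<longleftrightarrow> finite V \<and> V \<noteq> {} \<and>
     (\<forall>x\<in>V. \<forall>y\<in>V. w x y = w y x \<and> 0 \<le> w x y)"

definition ultrametric_on :: "'a set \<Rightarrow> ('a \<Rightarrow> 'a \<Rightarrow> real) \<Rightarrow> bool" where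
  "ultrametric_on V d \<longleftrightarrow>
     (\<forall>x\<in>V. \<forall>y\<in>V. 0 \<le> d x y \<and> (d x y = 0 \<longleftrightarrow> x = y) \<and> d x y = d y x) \<and>
     (\<forall>x\<in>V. \<forall>y\<in>V. \<forall>z\<in>V. d x y \<le> d x z + d z y) \<and>
     (\<forall>x\<in>V. \<forall>y\<in>V. \<forall>z\<in>V. d x y \<le> max (d x z) (d y z))"

definition ground_truth :: "'a set \<Rightarrow> ('a \<Rightarrow> 'a \<Rightarrow> real) \<Rightarrow> bool" where
  "ground_truth V w \<longleftrightarrow>
     (\<exists>d f. ultrametric_on V d \<and>
        (\<forall>t\<ge>0. f t \<ge> (0::real)) \<and>
        (\<forall>s t. 0 \<le> s \<longrightarrow> s \<le> t \<longrightarrow> f t \<le> f s) \<and>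
        (\<forall>x\<in>V. \<forall>y\<in>V. x \<noteq> y \<longrightarrow> w x y = f (d x y)))"

datatype 'a hctree = Leaf 'a | Node "'a hctree list"

fun leaves :: "'a hctree \<Rightarrow> 'a list" where
  "leaves (Leaf x) = [x]"
| "leaves (Node ts) = concat (map leaves ts)"

fun wf_tree :: "'a hctree \<Rightarrow> bool" where
  "wf_tree (Leaf x) = True"
| "wf_tree (Node ts) = (ts \<noteq> [] \<and> (\<forall>t\<in>set ts. wf_tree t))"

text \<open>All nodes of the tree, each identified with the subtree rooted at it.\<close>
fun subtrees :: "'a hctree \<Rightarrow> 'a hctree set" where
  "subtrees (Leaf x) = {Leaf x}"
| "subtrees (Node ts) = insert (Node ts) (\<Union>t\<in>set ts. subtrees t)"

text \<open>A rooted tree whose leaf set is exactly V (each vertex labels exactly one leaf;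
  every internal node has at least one child, so all tree leaves are vertex leaves).\<close>
definition hc_tree :: "'a set \<Rightarrow> 'a hctree \<Rightarrow> bool" where
  "hc_tree V T \<longleftrightarrow> wf_tree T \<and> distinct (leaves T) \<and> set (leaves T) = V"

text \<open>{i,j|k}: LCA(i,j) is a proper descendant of LCA(i,j,k), i.e. some node of T has
  both i and j but not k below it.\<close>
definition split3 :: "'a hctree \<Rightarrow> 'a \<Rightarrow> 'a \<Rightarrow> 'a \<Rightarrow> bool" where
  "split3 T i j k \<longleftrightarrow>
     (\<exists>s\<in>subtrees T. i \<in> set (leaves s) \<and> j \<in> set (leaves s) \<and> k \<notin> set (leaves s))"

definition triplet_cost :: "('a \<Rightarrow> 'a \<Rightarrow> real) \<Rightarrow> 'a hctree \<Rightarrow> 'a \<Rightarrow> 'a \<Rightarrow> 'a \<Rightarrow> real" where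
  "triplet_cost w T i j k =
     (if split3 T i j k then w i k + w j k
      else if split3 T i k j then w i j + w j k
      else if split3 T j k i then w i j + w i k
      else w i j + w j k + w i k)"

text \<open>Sums over unordered triples of distinct vertices, written as sums over ordered
  triples divided by 6 (both summands are symmetric in i,j,k).\<close>
definition TC :: "'a set \<Rightarrow> ('a \<Rightarrow> 'a \<Rightarrow> real) \<Rightarrow> 'a hctree \<Rightarrow> real" where
  "TC V w T = (\<Sum>i\<in>V. \<Sum>j\<in>V. \<Sum>k\<in>V.
      if i \<noteq> j \<and> i \<noteq> k \<and> j \<noteq> k then triplet_cost w T i j k else 0) / 6"

definition BC :: "'a set \<Rightarrow> ('a \<Rightarrow> 'a \<Rightarrow> real) \<Rightarrow> real" where
  "BC V w = (\<Sum>i\<in>V. \<Sum>j\<in>V. \<Sum>k\<in>V.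
      if i \<noteq> j \<and> i \<noteq> k \<and> j \<noteq> k
      then min (w i j + w i k) (min (w i j + w j k) (w i k + w j k)) else 0) / 6"

definition rho :: "'a set \<Rightarrow> ('a \<Rightarrow> 'a \<Rightarrow> real) \<Rightarrow> 'a hctree \<Rightarrow> ereal" where
  "rho V w T =
     (if BC V w = 0 then (if TC V w T = 0 then 1 else \<infinity>)
      else ereal (TC V w T / BC V w))"

definition rho_star :: "'a set \<Rightarrow> ('a \<Rightarrow> 'a \<Rightarrow> real) \<Rightarrow> ereal" where
  "rho_star V w = (INF T\<in>{T. hc_tree V T}. rho V w T)"

definition perfect_HC_structure :: "'a set \<Rightarrow> ('a \<Rightarrow> 'a \<Rightarrow> real) \<Rightarrow> bool" where
  "perfect_HC_structure V w \<longleftrightarrow> rho_star V w = 1"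

end

theory Submission
  imports Defs
begin

text \<open>Take a point x of an ultrametric space V and let r be its largest distance to V. All
  triangles of an ultrametric are isosceles with the two longest sides equal, so the open ball
  of radius r around x and its complement are each closer internally than to the other part.
  Recursing on both parts yields a binary tree all of whose clusters are tight. If the weights
  are a non-increasing function of the distance, such a tree separates every triple along its
  two lightest edges, so each triplet cost attains its lower bound and TC = BC.
  Conversely, in a ground-truth input the lightest weight of every triangle occurs twice. The
  weights i + j on {0, 1, 2} violate this, yet the tree that splits 0 off from 1 and 2 cuts
  the two lightest edges of the only triple.\<close>

fun binary :: "'a hctree \<Rightarrow> bool" where
  "binary (Leaf x) = True"
| "binary (Node [l, r]) = (binary l \<and> binary r)"
| "binary (Node _) = False"

lemma binary_imp_wf_tree: "binary T \<Longrightarrow> wf_tree T"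
  by (induction T rule: binary.induct) auto

lemma split3_sym: "split3 T i j k \<longleftrightarrow> split3 T j i k"
  unfolding split3_def by blast

lemma split3_Node: "t \<in> set ts \<Longrightarrow> split3 t i j k \<Longrightarrow> split3 (Node ts) i j k"
  unfolding split3_def by auto

lemma subtrees_refl: "t \<in> subtrees t"
  by (cases t) auto

lemma split3_child:
  "t \<in> set ts \<Longrightarrow> i \<in> set (leaves t) \<Longrightarrow> j \<in> set (leaves t) \<Longrightarrow> k \<notin> set (leaves t)
   \<Longrightarrow> split3 (Node ts) i j k"
  unfolding split3_def using subtrees_refl[of t] by auto

lemma binary_resolves_triples:
  assumes "binary T" "i \<in> set (leaves T)" "j \<in> set (leaves T)" "k \<in> set (leaves T)"
    "i \<noteq> j" "i \<noteq> k" "j \<noteq> k"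
  shows "split3 T i j k \<or> split3 T i k j \<or> split3 T j k i"
  using assms
proof (induction T rule: binary.induct)
  case (2 l r)
  have in_child: "x \<in> set (leaves l) \<or> x \<in> set (leaves r)" if "x \<in> {i, j, k}" for x
    using "2.prems" that by auto
  have all_in_child: ?case if "t \<in> {l, r}" "{i, j, k} \<subseteq> set (leaves t)" for t
    using "2.IH" "2.prems" that split3_Node[of t "[l, r]"] by auto
  consider (ij) t where "t \<in> {l, r}" "i \<in> set (leaves t)" "j \<in> set (leaves t)"
    | (ik) t where "t \<in> {l, r}" "i \<in> set (leaves t)" "k \<in> set (leaves t)"
    | (jk) t where "t \<in> {l, r}" "j \<in> set (leaves t)" "k \<in> set (leaves t)"
    using in_child
    by (cases "i \<in> set (leaves l)"; cases "j \<in> set (leaves l)"; cases "k \<in> set (leaves l)")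
      blast+
  then show ?case
  proof cases
    case ij
    then show ?thesis using all_in_child split3_child[of t "[l, r]" i j k] by auto
  next
    case ik
    then show ?thesis using all_in_child split3_child[of t "[l, r]" i k j] by auto
  next
    case jk
    then show ?thesis using all_in_child split3_child[of t "[l, r]" j k i] by auto
  qed
qed auto

lemma triplet_cost_ge_min:
  assumes "0 \<le> w i j" "0 \<le> w i k" "0 \<le> w j k"
  shows "min (w i j + w i k) (min (w i j + w j k) (w i k + w j k)) \<le> triplet_cost w T i j k"
  using assms unfolding triplet_cost_def by auto

lemma BC_nonneg: "similarity_graph V w \<Longrightarrow> 0 \<le> BC V w"
  unfolding BC_def similarity_graph_def by (intro divide_nonneg_pos sum_nonneg) auto

lemma BC_le_TC: "similarity_graph V w \<Longrightarrow> BC V w \<le> TC V w T"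
  unfolding BC_def TC_def similarity_graph_def
  by (intro divide_right_mono sum_mono) (auto intro: triplet_cost_ge_min)

lemma rho_ge_1:
  assumes "similarity_graph V w"
  shows "1 \<le> rho V w T"
proof (cases "BC V w = 0")
  case False
  then have "0 < BC V w" using BC_nonneg[OF assms] by linarith
  then show ?thesis using False BC_le_TC[OF assms] by (simp add: rho_def)
qed (simp add: rho_def)

lemma perfect_HC_structure_if_TC_eq_BC:
  assumes "similarity_graph V w" "hc_tree V T" "TC V w T = BC V w"
  shows "perfect_HC_structure V w"
proof -
  have "rho_star V w \<le> rho V w T" unfolding rho_star_def using assms(2) by (simp add: INF_lower)
  also have "rho V w T = 1" using assms(3) by (simp add: rho_def)
  finally show ?thesis
    unfolding perfect_HC_structure_def rho_star_def
    using rho_ge_1[OF assms(1)] by (simp add: antisym le_INF_iff)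
qed

lemma TC_eq_BC_if_cuts_lightest_edges:
  assumes "similarity_graph V w" "binary T" "hc_tree V T"
    and cuts_lightest: "\<And>a b c. a \<in> V \<Longrightarrow> b \<in> V \<Longrightarrow> c \<in> V \<Longrightarrow> a \<noteq> b \<Longrightarrow> a \<noteq> c \<Longrightarrow> b \<noteq> c
       \<Longrightarrow> split3 T a b c \<Longrightarrow> w a c \<le> w a b \<and> w b c \<le> w a b"
  shows "TC V w T = BC V w"
proof -
  have "triplet_cost w T i j k = min (w i j + w i k) (min (w i j + w j k) (w i k + w j k))"
    if "i \<in> V" "j \<in> V" "k \<in> V" "i \<noteq> j" "i \<noteq> k" "j \<noteq> k" for i j k
  proof -
    have "w k j = w j k" "w j i = w i j" "w k i = w i k"
      using assms(1) that unfolding similarity_graph_def by auto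
    moreover have "split3 T i j k \<or> split3 T i k j \<or> split3 T j k i"
      using binary_resolves_triples[OF assms(2)] assms(3) that unfolding hc_tree_def by auto
    ultimately show ?thesis
      unfolding triplet_cost_def
      using cuts_lightest[of i j k] cuts_lightest[of i k j] cuts_lightest[of j k i] that by auto
  qed
  then show ?thesis unfolding TC_def BC_def by (auto intro!: sum.cong)
qed

lemma
  assumes "ultrametric_on V d" "x \<in> V" "y \<in> V"
  shows ultrametric_on_sym: "d x y = d y x"
    and ultrametric_on_nonneg: "0 \<le> d x y"
    and ultrametric_on_eq_0_iff: "d x y = 0 \<longleftrightarrow> x = y"
  using assms unfolding ultrametric_on_def by auto

lemma ultrametric_on_max:
  "ultrametric_on V d \<Longrightarrow> x \<in> V \<Longrightarrow> y \<in> V \<Longrightarrow> z \<in> V \<Longrightarrow> d x y \<le> max (d x z) (d y z)"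
  unfolding ultrametric_on_def by blast

lemma ultrametric_on_subset: "ultrametric_on V d \<Longrightarrow> U \<subseteq> V \<Longrightarrow> ultrametric_on U d"
  unfolding ultrametric_on_def by (meson subsetD)

lemma ultrametric_on_isosceles:
  assumes "ultrametric_on V d" "x \<in> V" "y \<in> V" "z \<in> V" "d x z < d x y"
  shows "d y z = d x y"
proof (rule antisym)
  have "d y z \<le> max (d y x) (d z x)" using ultrametric_on_max[OF assms(1,3,4,2)] .
  then show "d y z \<le> d x y"
    using assms(5) ultrametric_on_sym[OF assms(1)] assms(2-4) by (simp add: max_def)
  have "d x y \<le> max (d x z) (d y z)" using ultrametric_on_max[OF assms(1,2,3,4)] .
  then show "d x y \<le> d y z" using assms(5) by (simp add: le_max_iff_disj)
qed

lemma ultrametric_on_closer_within_ball: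
  assumes um: "ultrametric_on V d" and V: "x \<in> V" "i \<in> V" "j \<in> V" "k \<in> V"
    and "d x i < r" "d x j < r" "r \<le> d x k"
  shows "d i j \<le> d i k"
proof -
  have "d i j \<le> max (d x i) (d x j)"
    using ultrametric_on_max[OF um V(2,3,1)] ultrametric_on_sym[OF um] V by simp
  also have "\<dots> < r" using assms by simp
  also have "r \<le> d k i"
    using ultrametric_on_isosceles[OF um V(1,4,2)] assms by simp
  finally show ?thesis using ultrametric_on_sym[OF um V(2,4)] by simp
qed

lemma ultrametric_on_closer_within_shell:
  assumes um: "ultrametric_on V d" and V: "x \<in> V" "i \<in> V" "j \<in> V" "k \<in> V"
    and "d x i = r" "d x j \<le> r" "d x k < r"
  shows "d i j \<le> d i k"
proof -
  have "d i j \<le> max (d x i) (d x j)"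
    using ultrametric_on_max[OF um V(2,3,1)] ultrametric_on_sym[OF um] V by simp
  also have "\<dots> \<le> r" using assms by simp
  also have "r = d i k"
    using ultrametric_on_isosceles[OF um V(1,2,4)] assms by simp
  finally show ?thesis .
qed

definition tight_clusters :: "('a \<Rightarrow> 'a \<Rightarrow> real) \<Rightarrow> 'a set \<Rightarrow> 'a hctree \<Rightarrow> bool" where
  "tight_clusters d V T \<longleftrightarrow> (\<forall>s\<in>subtrees T. \<forall>i\<in>set (leaves s). \<forall>j\<in>set (leaves s).
      \<forall>k\<in>V - set (leaves s). d i j \<le> d i k)"

lemma tight_clusters_split3:
  "tight_clusters d V T \<Longrightarrow> split3 T i j k \<Longrightarrow> k \<in> V \<Longrightarrow> d i j \<le> d i k"
  unfolding tight_clusters_def split3_def by blast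

lemma leaves_subtrees: "s \<in> subtrees t \<Longrightarrow> set (leaves s) \<subseteq> set (leaves t)"
  by (induction t arbitrary: s) fastforce+

lemma tight_clusters_Node2:
  assumes "tight_clusters d A TA" "set (leaves TA) = A"
    and "tight_clusters d B TB" "set (leaves TB) = B"
    and "\<And>i j k. i \<in> A \<Longrightarrow> j \<in> A \<Longrightarrow> k \<in> B - A \<Longrightarrow> d i j \<le> d i k"
    and "\<And>i j k. i \<in> B \<Longrightarrow> j \<in> B \<Longrightarrow> k \<in> A - B \<Longrightarrow> d i j \<le> d i k"
  shows "tight_clusters d (A \<union> B) (Node [TA, TB])"
  unfolding tight_clusters_def
proof (intro ballI)
  fix s i j k
  assume s: "s \<in> subtrees (Node [TA, TB])" and ij: "i \<in> set (leaves s)" "j \<in> set (leaves s)"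
    and k: "k \<in> A \<union> B - set (leaves s)"
  consider "s = Node [TA, TB]" | "s \<in> subtrees TA" | "s \<in> subtrees TB" using s by auto
  then show "d i j \<le> d i k"
  proof cases
    case 1
    then show ?thesis using k assms(2,4) by auto
  next
    case 2
    then have "set (leaves s) \<subseteq> A" using leaves_subtrees assms(2) by blast
    then show ?thesis using assms(1,5) 2 ij k unfolding tight_clusters_def by blast
  next
    case 3
    then have "set (leaves s) \<subseteq> B" using leaves_subtrees assms(4) by blast
    then show ?thesis using assms(3,6) 3 ij k unfolding tight_clusters_def by blast
  qed
qed

lemma ultrametric_on_split:
  assumes "finite V" "ultrametric_on V d" "x \<in> V" "y \<in> V" "x \<noteq> y"
  obtains A where "x \<in> A" "A \<subset> V"
    and "\<And>i j k. i \<in> A \<Longrightarrow> j \<in> A \<Longrightarrow> k \<in> V - A \<Longrightarrow> d i j \<le> d i k"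
    and "\<And>i j k. i \<in> V - A \<Longrightarrow> j \<in> V - A \<Longrightarrow> k \<in> A \<Longrightarrow> d i j \<le> d i k"
proof
  note um = \<open>ultrametric_on V d\<close>
  define r where "r = Max (d x ` V)"
  have le_r: "d x u \<le> r" if "u \<in> V" for u
    unfolding r_def using \<open>finite V\<close> that by simp
  have "r \<in> d x ` V" unfolding r_def using \<open>finite V\<close> \<open>x \<in> V\<close> by (intro Max_in) auto
  then obtain z where z: "z \<in> V" "d x z = r" by blast
  have "0 < d x y"
    using ultrametric_on_nonneg[OF um assms(3,4)] ultrametric_on_eq_0_iff[OF um assms(3,4)] assms(5)
    by simp
  then have "0 < r" using le_r[OF assms(4)] by simp
  define A where "A = {u \<in> V. d x u < r}"
  show "x \<in> A" using \<open>0 < r\<close> assms(3) ultrametric_on_eq_0_iff[OF um assms(3,3)] unfolding A_def by simp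
  show "A \<subset> V" using z unfolding A_def by auto
  show "d i j \<le> d i k" if "i \<in> A" "j \<in> A" "k \<in> V - A" for i j k
    using that ultrametric_on_closer_within_ball[OF um assms(3), of i j k r] unfolding A_def by auto
  show "d i j \<le> d i k" if "i \<in> V - A" "j \<in> V - A" "k \<in> A" for i j k
  proof -
    have "d x i = r" using that le_r[of i] unfolding A_def by auto
    then show ?thesis
      using that le_r ultrametric_on_closer_within_shell[OF um assms(3), of i j k r]
      unfolding A_def by auto
  qed
qed

lemma ultrametric_tight_binary_tree:
  assumes "finite V" "V \<noteq> {}" "ultrametric_on V d"
  shows "\<exists>T. binary T \<and> distinct (leaves T) \<and> set (leaves T) = V \<and> tight_clusters d V T"
  using assms
proof (induction V rule: finite_psubset_induct)
  case (psubset V)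
  note um = \<open>ultrametric_on V d\<close>
  obtain x where x: "x \<in> V" using psubset.prems by blast
  show ?case
  proof (cases "V = {x}")
    case True
    then show ?thesis by (intro exI[of _ "Leaf x"]) (auto simp: tight_clusters_def)
  next
    case False
    then obtain y where "y \<in> V" "y \<noteq> x" using x by blast
    then obtain A where A: "x \<in> A" "A \<subset> V"
      and cross: "\<And>i j k. i \<in> A \<Longrightarrow> j \<in> A \<Longrightarrow> k \<in> V - A \<Longrightarrow> d i j \<le> d i k"
        "\<And>i j k. i \<in> V - A \<Longrightarrow> j \<in> V - A \<Longrightarrow> k \<in> A \<Longrightarrow> d i j \<le> d i k"
      using ultrametric_on_split[OF \<open>finite V\<close> um x] by metis
    have "V - A \<subset> V" "A \<noteq> {}" "V - A \<noteq> {}" using A by auto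
    obtain TA where
      TA: "binary TA" "distinct (leaves TA)" "set (leaves TA) = A" "tight_clusters d A TA"
      using psubset.IH[OF \<open>A \<subset> V\<close> \<open>A \<noteq> {}\<close>] ultrametric_on_subset[OF um] A(2) by blast
    obtain TB where
      TB: "binary TB" "distinct (leaves TB)" "set (leaves TB) = V - A" "tight_clusters d (V - A) TB"
      using psubset.IH[OF \<open>V - A \<subset> V\<close> \<open>V - A \<noteq> {}\<close>] ultrametric_on_subset[OF um] by blast
    have "tight_clusters d (A \<union> (V - A)) (Node [TA, TB])"
      using cross by (intro tight_clusters_Node2[OF TA(4,3) TB(4,3)]) auto
    moreover have "A \<union> (V - A) = V" using A by auto
    ultimately show ?thesis using TA TB by (intro exI[of _ "Node [TA, TB]"]) auto
  qed
qed

lemma ground_truth_imp_perfect_HC_structure: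
  assumes sim: "similarity_graph V w" and "ground_truth V w"
  shows "perfect_HC_structure V w"
proof -
  obtain d f where um: "ultrametric_on V d"
    and f_antimono: "\<forall>s t. 0 \<le> s \<longrightarrow> s \<le> t \<longrightarrow> f t \<le> f s"
    and w_eq: "\<forall>x\<in>V. \<forall>y\<in>V. x \<noteq> y \<longrightarrow> w x y = f (d x y)"
    using \<open>ground_truth V w\<close> unfolding ground_truth_def by blast
  obtain T where T: "binary T" "distinct (leaves T)" "set (leaves T) = V" "tight_clusters d V T"
    using ultrametric_tight_binary_tree[OF _ _ um] sim unfolding similarity_graph_def by blast
  then have "hc_tree V T" unfolding hc_tree_def by (simp add: binary_imp_wf_tree)
  moreover have "TC V w T = BC V w"
  proof (rule TC_eq_BC_if_cuts_lightest_edges[OF sim \<open>binary T\<close> \<open>hc_tree V T\<close>])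
    fix a b c
    assume abc: "a \<in> V" "b \<in> V" "c \<in> V" "a \<noteq> b" "a \<noteq> c" "b \<noteq> c" and "split3 T a b c"
    then have "d a b \<le> d a c" "d b a \<le> d b c"
      using tight_clusters_split3[OF T(4)] split3_sym[of T a b c] by simp_all
    moreover have "d b a = d a b" "0 \<le> d a b"
      using ultrametric_on_sym[OF um] ultrametric_on_nonneg[OF um] abc by auto
    ultimately have "f (d a c) \<le> f (d a b)" "f (d b c) \<le> f (d a b)"
      using f_antimono by auto
    then show "w a c \<le> w a b \<and> w b c \<le> w a b"
      using w_eq abc by simp
  qed
  ultimately show ?thesis using perfect_HC_structure_if_TC_eq_BC[OF sim] by blast
qed

lemma ground_truth_isosceles:
  assumes "ground_truth V w" "x \<in> V" "y \<in> V" "z \<in> V" "x \<noteq> y" "x \<noteq> z" "y \<noteq> z"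
    and "w x y < w x z"
  shows "w y z = w x y"
proof -
  obtain d f where um: "ultrametric_on V d"
    and f_antimono: "\<forall>s t. 0 \<le> s \<longrightarrow> s \<le> t \<longrightarrow> f t \<le> f s"
    and w_eq: "\<forall>x\<in>V. \<forall>y\<in>V. x \<noteq> y \<longrightarrow> w x y = f (d x y)"
    using assms(1) unfolding ground_truth_def by blast
  have "d x z < d x y"
  proof (rule ccontr)
    assume "\<not> d x z < d x y"
    then have "f (d x z) \<le> f (d x y)"
      using f_antimono ultrametric_on_nonneg[OF um assms(2,3)] by auto
    then show False using assms w_eq by auto
  qed
  then have "d y z = d x y" using ultrametric_on_isosceles[OF um assms(2-4)] by blast
  then show ?thesis using w_eq assms by simp
qed

lemma similarity_graph_sum_weights: "similarity_graph {0, 1, 2} (\<lambda>i j. real (i + j))"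
  unfolding similarity_graph_def by auto

lemma perfect_HC_structure_sum_weights: "perfect_HC_structure {0, 1, 2} (\<lambda>i j. real (i + j))"
proof -
  let ?T = "Node [Node [Leaf 1, Leaf 2], Leaf (0::nat)]"
  have "hc_tree {0, 1, 2} ?T" unfolding hc_tree_def by auto
  moreover have "TC {0, 1, 2} (\<lambda>i j. real (i + j)) ?T = BC {0, 1, 2} (\<lambda>i j. real (i + j))"
  proof (rule TC_eq_BC_if_cuts_lightest_edges[OF similarity_graph_sum_weights _ \<open>hc_tree _ ?T\<close>])
    fix a b c :: nat
    assume "a \<in> {0, 1, 2}" "b \<in> {0, 1, 2}" "c \<in> {0, 1, 2}" "a \<noteq> b" "a \<noteq> c" "b \<noteq> c"
      and "split3 ?T a b c"
    then have "c = 0" unfolding split3_def by auto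
    then show "real (a + c) \<le> real (a + b) \<and> real (b + c) \<le> real (a + b)" by simp
  qed simp
  ultimately show ?thesis using perfect_HC_structure_if_TC_eq_BC[OF similarity_graph_sum_weights] by blast
qed

lemma not_ground_truth_sum_weights: "\<not> ground_truth {0, 1, 2} (\<lambda>i j. real (i + j))"
proof
  assume "ground_truth {0, 1, 2} (\<lambda>i j. real (i + j))"
  from ground_truth_isosceles[OF this, of 0 1 2] show False by simp
qed

theorem theorem4:
  fixes V :: "'a set" and w :: "'a \<Rightarrow> 'a \<Rightarrow> real"
  shows "(similarity_graph V w \<and> ground_truth V w \<longrightarrow> perfect_HC_structure V w) \<and>
         (\<exists>(V' :: nat set) w'. similarity_graph V' w' \<and> perfect_HC_structure V' w' \<and>
              \<not> ground_truth V' w')"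
  using ground_truth_imp_perfect_HC_structure similarity_graph_sum_weights
    perfect_HC_structure_sum_weights not_ground_truth_sum_weights by blast

end
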